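(* Let $P$ be the Borel probability measure on $\mathbb{R}$ with density $f(x)=\frac32$ if $x\in J_1:=[0,\frac13]$, $f(x)=\frac94$ if $x\in J_2\cup J_3$ where $J_2:=[\frac23,\frac79]$ and $J_3:=[\frac89,1]$, and $f(x)=0$ otherwise. Let $n\ge3$ and let $\alpha_n$ be an optimal set of $n$-means for $P$. Write $\alpha_{n,j}:=\alpha_n\cap J_j$ and $n_j:=\mathrm{card}(\alpha_{n,j})$ for $1\le j\le3$. Then each $\alpha_{n,j}$ is an optimal set of $n_j$-means for $P(\cdot|J_j)$, $n=n_1+n_2+n_3$, and \[V_n=\sum_{j=1}^3V(P,\alpha_{n,j},J_j)=\frac{1}{216}\frac{1}{n_1^2}+\frac{1}{3888}\Big(\frac{1}{n_2^2}+\frac{1}{n_3^2}\Big).\]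
   Context: $P(\cdot|B)=P(\cdot\cap B)/P(B)$. For a Borel probability $Q$, an optimal set of $n$-means for $Q$ is a set $\alpha$ with $\mathrm{card}(\alpha)\le n$ attaining $\inf\{\int\min_{a\in\alpha}(x-a)^2\,dQ(x):\mathrm{card}(\alpha)\le n\}$; $V_n$ denotes this infimum for $Q=P$. For finite $\alpha$ and Borel $B$, $V(P,\alpha,B):=\int_B\min_{a\in\alpha}(x-a)^2\,dP(x)$. *)

theory Defs
  imports "HOL-Probability.Probability"
begin

definition dist_err :: "real measure \<Rightarrow> real set \<Rightarrow> real set \<Rightarrow> ennreal" where
  "dist_err Q \<alpha> B = (\<integral>\<^sup>+ x. ennreal (Min ((\<lambda>a. (x - a)\<^sup>2) ` \<alpha>)) * indicator B x \<partial>Q)"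

definition quant_err :: "real measure \<Rightarrow> real set \<Rightarrow> ennreal" where
  "quant_err Q \<alpha> = (\<integral>\<^sup>+ x. ennreal (Min ((\<lambda>a. (x - a)\<^sup>2) ` \<alpha>)) \<partial>Q)"

definition codebooks :: "nat \<Rightarrow> real set set" where
  "codebooks n = {\<alpha>. finite \<alpha> \<and> \<alpha> \<noteq> {} \<and> card \<alpha> \<le> n}"

definition Vn :: "real measure \<Rightarrow> nat \<Rightarrow> ennreal" where
  "Vn Q n = (INF \<alpha>\<in>codebooks n. quant_err Q \<alpha>)"

definition optimal_n_means :: "real measure \<Rightarrow> nat \<Rightarrow> real set \<Rightarrow> bool" where
  "optimal_n_means Q n \<alpha> \<longleftrightarrow> \<alpha> \<in> codebooks n \<and> quant_err Q \<alpha> = Vn Q n"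

text \<open>Conditional measure P(.|B) = P(. \<inter> B)/P(B): the library's uniform_measure.\<close>
abbreviation cond_measure :: "real measure \<Rightarrow> real set \<Rightarrow> real measure" where
  "cond_measure M B \<equiv> uniform_measure M B"

definition J1 :: "real set" where "J1 = {0..1/3}"
definition J2 :: "real set" where "J2 = {2/3..7/9}"
definition J3 :: "real set" where "J3 = {8/9..1}"

definition dens :: "real \<Rightarrow> real" where
  "dens x = (if x \<in> J1 then 3/2 else if x \<in> J2 \<union> J3 then 9/4 else 0)"

definition P :: "real measure" where
  "P = density lborel (\<lambda>x. ennreal (dens x))"

end

theory Submission
  imports Defs
begin

text \<open>
  For a finite codebook \<open>B\<close>, \<open>interval_err a b B\<close> is its quantization error for Lebesgue measure
  on \<open>[a, b]\<close>, and the error of \<open>B\<close> for \<open>P\<close> is the weighted sum of the three interval errors.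
  With \<open>k\<close> points the interval error is at least \<open>(b - a)\<^sup>3 / (12 k\<^sup>2)\<close> (induction on \<open>k\<close>,
  splitting off the Voronoi cell of the largest point), with equality for the midpoints of the
  uniform subdivision, and strictly more if some point serving the interval lies outside it.
  Split an optimal codebook by the midpoints \<open>1/2\<close> and \<open>5/6\<close> of the gaps between the
  \<open>J\<^sub>i\<close>. Points of the other clusters are too far away to help, so each cluster obeys the
  \<open>k\<close>-point bound on its own interval. Comparing the resulting lower bound with the error of
  uniform codebooks shows that all clusters are nonempty, lie in their intervals and use all
  \<open>n\<close> points; the bound is then attained on each interval, which makes every cluster optimal
  for the conditional (uniform) distribution.
\<close>

section \<open>Nearest-point distortion on an interval\<close>

definition min_sqdist :: "real set \<Rightarrow> real \<Rightarrow> real" where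
  "min_sqdist B x = Min ((\<lambda>a. (x - a)\<^sup>2) ` B)"

lemma min_sqdist_insert:
  "finite B \<Longrightarrow> B \<noteq> {} \<Longrightarrow> min_sqdist (insert t B) x = min ((x - t)\<^sup>2) (min_sqdist B x)"
  unfolding min_sqdist_def by (simp add: Min_insert)

lemma min_sqdist_singleton [simp]: "min_sqdist {t} = (\<lambda>x. (x - t)\<^sup>2)"
  unfolding min_sqdist_def by auto

lemma min_sqdist_le: "finite B \<Longrightarrow> t \<in> B \<Longrightarrow> min_sqdist B x \<le> (x - t)\<^sup>2"
  unfolding min_sqdist_def by (rule Min_le) auto

lemma min_sqdist_greatest:
  "finite B \<Longrightarrow> B \<noteq> {} \<Longrightarrow> (\<And>t. t \<in> B \<Longrightarrow> c \<le> (x - t)\<^sup>2) \<Longrightarrow> c \<le> min_sqdist B x"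
  unfolding min_sqdist_def by (subst Min_ge_iff) auto

lemma min_sqdist_nonneg: "finite B \<Longrightarrow> B \<noteq> {} \<Longrightarrow> 0 \<le> min_sqdist B x"
  by (rule min_sqdist_greatest) auto

lemma min_sqdist_antimono:
  "finite B \<Longrightarrow> B' \<subseteq> B \<Longrightarrow> B' \<noteq> {} \<Longrightarrow> min_sqdist B x \<le> min_sqdist B' x"
  unfolding min_sqdist_def by (rule Min_antimono) auto

lemma min_sqdist_subset_eq:
  assumes "finite B" "B' \<subseteq> B" "B' \<noteq> {}" "\<And>t. t \<in> B \<Longrightarrow> \<exists>s\<in>B'. \<bar>x - s\<bar> \<le> \<bar>x - t\<bar>"
  shows "min_sqdist B x = min_sqdist B' x"
proof (rule order_antisym)
  show "min_sqdist B x \<le> min_sqdist B' x" using assms(1-3) by (rule min_sqdist_antimono)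
  show "min_sqdist B' x \<le> min_sqdist B x"
  proof (rule min_sqdist_greatest)
    fix t assume "t \<in> B"
    then obtain s where "s \<in> B'" "(x - s)\<^sup>2 \<le> (x - t)\<^sup>2"
      using assms(4) abs_le_square_iff by blast
    then show "min_sqdist B' x \<le> (x - t)\<^sup>2"
      using min_sqdist_le[OF finite_subset[OF assms(2,1)]] order_trans by blast
  qed (use assms in auto)
qed

lemma min_sqdist_reflect: "min_sqdist (uminus ` B) = (\<lambda>x. min_sqdist B (- x))"
proof
  fix x :: real
  have "(\<lambda>a. (x - a)\<^sup>2) \<circ> uminus = (\<lambda>a. (- x - a)\<^sup>2)"
    by (rule ext) (simp add: power2_eq_square algebra_simps)
  then show "min_sqdist (uminus ` B) x = min_sqdist B (- x)"
    unfolding min_sqdist_def image_comp by simp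
qed

lemma continuous_on_min_sqdist: "finite B \<Longrightarrow> B \<noteq> {} \<Longrightarrow> continuous_on UNIV (min_sqdist B)"
proof (induction B rule: finite_ne_induct)
  case (insert t B)
  then have "min_sqdist (insert t B) = (\<lambda>x. min ((x - t)\<^sup>2) (min_sqdist B x))"
    by (simp add: min_sqdist_insert fun_eq_iff)
  then show ?case by (simp add: continuous_on_min continuous_intros insert.IH)
qed (simp add: continuous_intros)

lemma min_sqdist_integrable: "finite B \<Longrightarrow> B \<noteq> {} \<Longrightarrow> min_sqdist B integrable_on {a..b}"
  by (meson continuous_on_min_sqdist continuous_on_subset integrable_continuous_interval subset_UNIV)

lemma borel_measurable_min_sqdist:
  "finite B \<Longrightarrow> B \<noteq> {} \<Longrightarrow> min_sqdist B \<in> borel_measurable borel"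
  using borel_measurable_continuous_onI[OF continuous_on_min_sqdist] by auto

definition interval_err :: "real \<Rightarrow> real \<Rightarrow> real set \<Rightarrow> real" where
  "interval_err a b B = integral {a..b} (min_sqdist B)"

lemma interval_err_combine:
  "finite B \<Longrightarrow> B \<noteq> {} \<Longrightarrow> a \<le> c \<Longrightarrow> c \<le> b \<Longrightarrow>
    interval_err a b B = interval_err a c B + interval_err c b B"
  unfolding interval_err_def
  by (rule Henstock_Kurzweil_Integration.integral_combine[symmetric]) (auto intro: min_sqdist_integrable)

lemma interval_err_nonneg: "finite B \<Longrightarrow> B \<noteq> {} \<Longrightarrow> 0 \<le> interval_err a b B"
  unfolding interval_err_def by (intro integral_nonneg min_sqdist_integrable min_sqdist_nonneg)

lemma interval_err_subinterval_le:
  assumes "finite B" "B \<noteq> {}" "a \<le> c" "c \<le> b"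
  shows "interval_err c b B \<le> interval_err a b B"
  using interval_err_combine[OF assms] interval_err_nonneg[OF assms(1,2), of a c] by linarith

lemma interval_err_cong:
  "(\<And>x. x \<in> {a..b} \<Longrightarrow> min_sqdist B x = min_sqdist B' x) \<Longrightarrow> interval_err a b B = interval_err a b B'"
  unfolding interval_err_def by (rule integral_cong) auto

lemma interval_err_antimono:
  "finite B \<Longrightarrow> B' \<subseteq> B \<Longrightarrow> B' \<noteq> {} \<Longrightarrow> interval_err a b B \<le> interval_err a b B'"
  unfolding interval_err_def
  by (intro integral_le min_sqdist_integrable) (auto intro: finite_subset min_sqdist_antimono)

lemma interval_err_reflect: "interval_err (- b) (- a) (uminus ` B) = interval_err a b B"
  unfolding interval_err_def min_sqdist_reflect by (rule Henstock_Kurzweil_Integration.integral_reflect_real)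

lemma integral_power2_shift:
  fixes a b t :: real
  assumes "a \<le> b"
  shows "integral {a..b} (\<lambda>x. (x - t)\<^sup>2) = ((b - t)^3 - (a - t)^3) / 3"
proof -
  have "((\<lambda>x. (x - t)\<^sup>2) has_integral ((b - t)^3/3 - (a - t)^3/3)) {a..b}"
  proof (rule fundamental_theorem_of_calculus[OF assms])
    fix x assume "x \<in> {a..b}"
    have "((\<lambda>x. (x - t)^3/3) has_real_derivative (x - t)\<^sup>2) (at x within {a..b})"
      by (auto intro!: derivative_eq_intros simp: power2_eq_square)
    then show "((\<lambda>x. (x - t)^3/3) has_vector_derivative (x - t)\<^sup>2) (at x within {a..b})"
      by (simp add: has_real_derivative_iff_has_vector_derivative)
  qed
  then show ?thesis by (simp add: integral_unique diff_divide_distrib)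
qed

lemma interval_err_singleton: "a \<le> b \<Longrightarrow> interval_err a b {t} = ((b - t)^3 - (a - t)^3) / 3"
  unfolding interval_err_def by (simp add: integral_power2_shift)

lemma interval_err_ge_nearest:
  assumes "a \<le> b" "finite B" "B \<noteq> {}"
    and "\<And>x t. x \<in> {a..b} \<Longrightarrow> t \<in> B \<Longrightarrow> \<bar>x - p\<bar> \<le> \<bar>x - t\<bar>"
  shows "((b - p)^3 - (a - p)^3) / 3 \<le> interval_err a b B"
proof -
  have "integral {a..b} (\<lambda>x. (x - p)\<^sup>2) \<le> interval_err a b B"
    unfolding interval_err_def using assms min_sqdist_integrable
    by (intro integral_le min_sqdist_greatest)
       (auto simp: abs_le_square_iff intro!: integrable_continuous_interval continuous_intros)
  then show ?thesis using integral_power2_shift[OF assms(1)] by simp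
qed

lemma interval_err_le_point:
  assumes "finite B" "t \<in> B" "a \<le> b"
  shows "interval_err a b B \<le> ((b - t)^3 - (a - t)^3) / 3"
proof -
  have "interval_err a b B \<le> integral {a..b} (\<lambda>x. (x - t)\<^sup>2)"
  proof -
    have "min_sqdist B integrable_on {a..b}" using assms by (intro min_sqdist_integrable) auto
    moreover have "(\<lambda>x. (x - t)\<^sup>2) integrable_on {a..b}"
      by (intro integrable_continuous_interval continuous_intros)
    ultimately show ?thesis
      unfolding interval_err_def using assms by (intro integral_le min_sqdist_le) auto
  qed
  then show ?thesis using integral_power2_shift[OF assms(3)] by simp
qed

lemma interval_err_split_max:
  assumes "finite B" "B \<noteq> {}" "\<forall>s\<in>B. s < t" "a \<le> b"
  obtains c where "a \<le> c" "c \<le> b"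
    "interval_err a b (insert t B) = interval_err a c B + integral {c..b} (\<lambda>x. (x - t)\<^sup>2)"
proof -
  define m where "m = (Max B + t) / 2"
  define c where "c = max a (min b m)"
  have Max: "Max B \<in> B" "\<forall>s\<in>B. s \<le> Max B" "Max B < t" using assms by auto
  have ac: "a \<le> c" "c \<le> b" using assms(4) unfolding c_def by auto
  have "interval_err a c (insert t B) = interval_err a c B"
    unfolding interval_err_def
  proof (rule integral_spike[of "{c}"])
    fix x assume "x \<in> {a..c} - {c}"
    then have "x \<le> m" unfolding c_def by auto
    then have "\<bar>x - Max B\<bar> \<le> \<bar>x - t\<bar>" using Max unfolding m_def by auto
    then have "min_sqdist B x \<le> (x - t)\<^sup>2"
      using min_sqdist_le[OF assms(1) Max(1)] abs_le_square_iff order_trans by metis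
    then show "min_sqdist B x = min_sqdist (insert t B) x"
      using min_sqdist_insert[OF assms(1,2)] by simp
  qed auto
  moreover have "interval_err c b (insert t B) = integral {c..b} (\<lambda>x. (x - t)\<^sup>2)"
    unfolding interval_err_def
  proof (rule integral_spike[of "{c}"])
    fix x assume "x \<in> {c..b} - {c}"
    then have "m \<le> x" unfolding c_def by auto
    then have "(x - t)\<^sup>2 \<le> min_sqdist B x"
      using Max unfolding m_def by (intro min_sqdist_greatest[OF assms(1,2)]) (auto simp: abs_le_square_iff[symmetric])
    then show "(x - t)\<^sup>2 = min_sqdist (insert t B) x"
      using min_sqdist_insert[OF assms(1,2)] by simp
  qed auto
  moreover have "interval_err a b (insert t B) = interval_err a c (insert t B) + interval_err c b (insert t B)"
    using assms(1) ac by (intro interval_err_combine) auto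
  ultimately show ?thesis using that[OF ac] by argo
qed

lemma interval_err_restrict:
  assumes "finite B" "S \<subseteq> B" "S \<noteq> {}" "S \<subseteq> {a..b}"
    and "\<And>t. t \<in> B - S \<Longrightarrow> t \<le> 2 * a - b \<or> 2 * b - a \<le> t"
  shows "interval_err a b B = interval_err a b S"
proof (rule interval_err_cong, rule min_sqdist_subset_eq[OF assms(1-3)])
  fix x t assume x: "x \<in> {a..b}" and t: "t \<in> B"
  obtain s where s: "s \<in> S" using assms(3) by auto
  show "\<exists>s\<in>S. \<bar>x - s\<bar> \<le> \<bar>x - t\<bar>"
  proof (cases "t \<in> S")
    case False
    have "s \<in> {a..b}" "t \<le> 2 * a - b \<or> 2 * b - a \<le> t" using s assms(4,5) t False by auto
    then have "\<bar>x - s\<bar> \<le> \<bar>x - t\<bar>" using x by auto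
    with s show ?thesis by blast
  qed auto
qed

section \<open>Lower bounds for the interval error\<close>

lemma integral_power2_shift_ge:
  fixes a b t :: real
  assumes "a \<le> b"
  shows "(b - a)^3 / 12 \<le> integral {a..b} (\<lambda>x. (x - t)\<^sup>2)"
proof -
  have "4 * ((b - t)^3 - (a - t)^3) - (b - a)^3 = 3 * (b - a) * ((b - t) + (a - t))\<^sup>2"
    by (simp add: power2_eq_square power3_eq_cube algebra_simps)
  moreover have "0 \<le> 3 * (b - a) * ((b - t) + (a - t))\<^sup>2" using assms by simp
  ultimately show ?thesis unfolding integral_power2_shift[OF assms] by linarith
qed

lemma integral_power2_shift_ge_beyond:
  fixes a b t :: real
  assumes "a \<le> b" "b \<le> t"
  shows "(b - a)^3 / 3 \<le> integral {a..b} (\<lambda>x. (x - t)\<^sup>2)"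
proof -
  have "(b - t)^3 - (a - t)^3 - (b - a)^3 = 3 * (b - a) * (t - b) * (t - a)"
    by (simp add: power2_eq_square power3_eq_cube algebra_simps)
  moreover have "0 \<le> 3 * (b - a) * (t - b) * (t - a)" using assms by simp
  ultimately have "(b - a)^3 \<le> (b - t)^3 - (a - t)^3" by linarith
  then show ?thesis unfolding integral_power2_shift[OF assms(1)] by (simp add: divide_right_mono)
qed

lemma integral_power2_shift_ge_far:
  fixes a b t r :: real
  assumes "a \<le> b" "0 \<le> r" "b + r \<le> t \<or> t \<le> a - r"
  shows "(b - a) * r\<^sup>2 \<le> integral {a..b} (\<lambda>x. (x - t)\<^sup>2)"
proof -
  have "integral {a..b} (\<lambda>x. r\<^sup>2) \<le> integral {a..b} (\<lambda>x. (x - t)\<^sup>2)"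
  proof (rule integral_le)
    fix x assume "x \<in> {a..b}"
    then have "\<bar>r\<bar> \<le> \<bar>x - t\<bar>" using assms by auto
    then show "r\<^sup>2 \<le> (x - t)\<^sup>2" by (simp add: abs_le_square_iff)
  qed (auto intro!: integrable_continuous_interval continuous_intros)
  then show ?thesis using assms(1) by simp
qed

lemma power3_add_div_le:
  fixes p q u v :: real
  assumes "p > 0" "q > 0" "u \<ge> 0" "v \<ge> 0"
  shows "(u + v)^3 / (p + q)\<^sup>2 \<le> u^3 / p\<^sup>2 + v^3 / q\<^sup>2"
proof -
  define x y where "x = u / p" and "y = v / q"
  have uv: "u = p * x" "v = q * y" using assms unfolding x_def y_def by auto
  have "(p + q)\<^sup>2 * (p * x^3 + q * y^3) - (p * x + q * y)^3
        = p * q * (x - y)\<^sup>2 * (p * (2 * x + y) + q * (x + 2 * y))"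
    by (simp add: power2_eq_square power3_eq_cube algebra_simps)
  moreover have "0 \<le> p * q * (x - y)\<^sup>2 * (p * (2 * x + y) + q * (x + 2 * y))"
    using assms unfolding x_def y_def by (intro mult_nonneg_nonneg add_nonneg_nonneg) auto
  ultimately have "(p * x + q * y)^3 \<le> (p + q)\<^sup>2 * (p * x^3 + q * y^3)" by linarith
  moreover have "p * x^3 = u^3 / p\<^sup>2" "q * y^3 = v^3 / q\<^sup>2"
    using assms unfolding uv by (simp_all add: power2_eq_square power3_eq_cube)
  ultimately show ?thesis using assms unfolding uv by (simp add: divide_le_eq mult.commute)
qed

lemma interval_err_lower_bound:
  assumes "finite B" "B \<noteq> {}" "a \<le> b"
  shows "(b - a)^3 / (12 * (real (card B))\<^sup>2) \<le> interval_err a b B"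
  using assms
proof (induction B arbitrary: b rule: finite_linorder_max_induct)
  case (insert t A)
  show ?case
  proof (cases "A = {}")
    case True
    then show ?thesis
      using integral_power2_shift_ge[OF insert.prems(2)] by (simp add: interval_err_def)
  next
    case False
    obtain c where c: "a \<le> c" "c \<le> b"
      and split: "interval_err a b (insert t A) = interval_err a c A + integral {c..b} (\<lambda>x. (x - t)\<^sup>2)"
      using interval_err_split_max[OF insert.hyps(1) False insert.hyps(2) insert.prems(2)] .
    let ?k = "real (card A)"
    have k: "0 < ?k" "real (card (insert t A)) = ?k + 1"
      using insert.hyps False by (auto simp: card_gt_0_iff)
    have "(b - a)^3 / (12 * (real (card (insert t A)))\<^sup>2) = ((c - a) + (b - c))^3 / (?k + 1)\<^sup>2 / 12"
      using k by simp
    also have "\<dots> \<le> ((c - a)^3 / ?k\<^sup>2 + (b - c)^3 / 1\<^sup>2) / 12"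
      using power3_add_div_le[of ?k 1 "c - a" "b - c"] k c by (simp add: divide_right_mono)
    also have "\<dots> \<le> interval_err a c A + integral {c..b} (\<lambda>x. (x - t)\<^sup>2)"
      using insert.IH[OF False c(1)] integral_power2_shift_ge[OF c(2), of t] by simp
    finally show ?thesis unfolding split .
  qed
qed simp

text \<open>A point beyond \<open>b\<close> serves the last part \<open>[c, b]\<close> at cost at least \<open>(b - c)\<^sup>3 / 3\<close>, the
  optimal cost of half a point; this is where \<open>card B - 1/2\<close> comes from.\<close>

lemma interval_err_lower_bound_beyond:
  assumes "finite B" "t \<in> B" "b \<le> t" "a \<le> b"
  shows "(b - a)^3 / (12 * (real (card B) - 1/2)\<^sup>2) \<le> interval_err a b B"
  using assms
proof (induction B rule: finite_linorder_max_induct)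
  case (insert s A)
  then have "b \<le> s" by auto
  show ?case
  proof (cases "A = {}")
    case True
    then show ?thesis
      using integral_power2_shift_ge_beyond[OF insert.prems(3) \<open>b \<le> s\<close>]
      by (simp add: interval_err_def power2_eq_square)
  next
    case False
    obtain c where c: "a \<le> c" "c \<le> b"
      and split: "interval_err a b (insert s A) = interval_err a c A + integral {c..b} (\<lambda>x. (x - s)\<^sup>2)"
      using interval_err_split_max[OF insert.hyps(1) False insert.hyps(2) insert.prems(3)] .
    let ?k = "real (card A)"
    have k: "0 < ?k" "real (card (insert s A)) - 1/2 = ?k + 1/2"
      using insert.hyps False by (auto simp: card_gt_0_iff)
    have "(b - a)^3 / (12 * (real (card (insert s A)) - 1/2)\<^sup>2) = ((c - a) + (b - c))^3 / (?k + 1/2)\<^sup>2 / 12"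
      using k by simp
    also have "\<dots> \<le> ((c - a)^3 / ?k\<^sup>2 + (b - c)^3 / (1/2)\<^sup>2) / 12"
      using power3_add_div_le[of ?k "1/2" "c - a" "b - c"] k c by (simp add: divide_right_mono)
    also have "\<dots> \<le> interval_err a c A + integral {c..b} (\<lambda>x. (x - s)\<^sup>2)"
      using interval_err_lower_bound[OF insert.hyps(1) False c(1)]
        integral_power2_shift_ge_beyond[OF c(2) \<open>b \<le> s\<close>]
      by (simp add: power2_eq_square)
    finally show ?thesis unfolding split .
  qed
qed simp

lemma interval_err_lower_bound_outside:
  assumes "finite B" "t \<in> B" "t \<le> a \<or> b \<le> t" "a \<le> b"
  shows "(b - a)^3 / (12 * (real (card B) - 1/2)\<^sup>2) \<le> interval_err a b B"
proof (cases "b \<le> t")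
  case True
  show ?thesis using interval_err_lower_bound_beyond[OF assms(1,2) True assms(4)] .
next
  case False
  then have "(- a - - b)^3 / (12 * (real (card (uminus ` B)) - 1/2)\<^sup>2)
      \<le> interval_err (- b) (- a) (uminus ` B)"
    using assms by (intro interval_err_lower_bound_beyond) auto
  then show ?thesis by (simp add: interval_err_reflect card_image)
qed

text \<open>A stretch of length \<open>L - s\<close> served only by points at distance at least \<open>r \<ge> L/2\<close> costs
  more than its share of the optimal \<open>k\<close>-point error.\<close>

lemma cube_diff_le:
  fixes s L r :: real
  assumes "0 \<le> s" "s \<le> L" "L\<^sup>2 \<le> 4 * r\<^sup>2"
  shows "L^3 - s^3 \<le> 12 * ((L - s) * r\<^sup>2)"
proof -
  have "L^3 - s^3 = (L - s) * (L\<^sup>2 + L * s + s\<^sup>2)"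
    by (simp add: power2_eq_square power3_eq_cube algebra_simps)
  also have "\<dots> \<le> (L - s) * (12 * r\<^sup>2)"
  proof (rule mult_left_mono)
    have "L * s \<le> L\<^sup>2" "s\<^sup>2 \<le> L\<^sup>2"
      using assms by (auto simp: power2_eq_square intro: mult_left_mono mult_mono)
    then show "L\<^sup>2 + L * s + s\<^sup>2 \<le> 12 * r\<^sup>2" using assms by linarith
  qed (use assms in simp)
  finally show ?thesis by simp
qed

lemma cube_split_le:
  fixes s L r k :: real
  assumes "0 \<le> s" "s \<le> L" "L\<^sup>2 \<le> 4 * r\<^sup>2" "1 \<le> k"
  shows "L^3 / (12 * k\<^sup>2) \<le> s^3 / (12 * k\<^sup>2) + (L - s) * r\<^sup>2"
proof -
  have "0 \<le> L^3 - s^3" using assms by (simp add: power_mono)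
  moreover have "1 \<le> k\<^sup>2" using assms by (simp add: one_le_power)
  ultimately have "(L^3 - s^3) / (12 * k\<^sup>2) \<le> (L^3 - s^3) / 12"
    by (intro divide_left_mono) auto
  also have "\<dots> \<le> (L - s) * r\<^sup>2" using cube_diff_le[OF assms(1-3)] by simp
  finally show ?thesis by (simp add: diff_divide_distrib)
qed

lemma cube_split_less:
  fixes s L r :: real and k :: nat
  assumes "0 \<le> s" "s \<le> L" "0 < L" "L\<^sup>2 \<le> 4 * r\<^sup>2" "1 \<le> k"
  shows "L^3 / (12 * (real k)\<^sup>2) < s^3 / (12 * (real k - 1/2)\<^sup>2) + (L - s) * r\<^sup>2"
proof (cases "k = 1")
  case True
  have "(2 * s - L)\<^sup>2 * (s + L) + L^3 = 4 * s^3 + 3 * (L - s) * L\<^sup>2 - L^3"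
    by (simp add: power2_eq_square power3_eq_cube algebra_simps)
  moreover have "0 < (2 * s - L)\<^sup>2 * (s + L) + L^3" using assms by (simp add: add_nonneg_pos)
  moreover have "3 * (L - s) * L\<^sup>2 \<le> 12 * ((L - s) * r\<^sup>2)"
    using assms mult_left_mono[OF assms(4), of "3 * (L - s)"] by (simp add: algebra_simps)
  ultimately have "L^3 < 4 * s^3 + 12 * ((L - s) * r\<^sup>2)" by linarith
  then show ?thesis using True by (simp add: power2_eq_square)
next
  case False
  then have k: "3/2 \<le> real k - 1/2" using assms by simp
  have "0 \<le> L^3 - s^3" using assms by (simp add: power_mono)
  moreover have "1 \<le> (real k - 1/2)\<^sup>2" using k by (simp add: one_le_power)
  ultimately have "(L^3 - s^3) / (12 * (real k - 1/2)\<^sup>2) \<le> (L^3 - s^3) / 12"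
    by (intro divide_left_mono) linarith+
  also have "\<dots> \<le> (L - s) * r\<^sup>2" using cube_diff_le[OF assms(1,2,4)] by simp
  finally have "L^3 / (12 * (real k - 1/2)\<^sup>2) \<le> s^3 / (12 * (real k - 1/2)\<^sup>2) + (L - s) * r\<^sup>2"
    by (simp add: diff_divide_distrib)
  moreover have "L^3 / (12 * (real k)\<^sup>2) < L^3 / (12 * (real k - 1/2)\<^sup>2)"
    using k assms by (intro divide_strict_left_mono) (auto simp: power_strict_mono)
  ultimately show ?thesis by linarith
qed

lemma interval_err_far_right:
  assumes "finite B" "A \<subseteq> B" "A \<noteq> {}" "a \<le> b" "0 \<le> r"
    and far: "\<forall>t\<in>B - A. b + r \<le> t" and order: "\<forall>s\<in>A. \<forall>t\<in>B - A. s < t"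
  obtains c where "a \<le> c" "c \<le> b" "interval_err a c A + (b - c) * r\<^sup>2 \<le> interval_err a b B"
proof (cases "B - A = {}")
  case True
  then have "B = A" using assms(2) by auto
  then show ?thesis using that[of b] assms(4) by simp
next
  case False
  have fin: "finite A" "finite (B - A)" using assms(1,2) finite_subset by auto
  define t where "t = Min (B - A)"
  have t: "t \<in> B - A" "\<forall>u\<in>B - A. t \<le> u"
    using Min_in[OF fin(2) False] Min_le[OF fin(2)] unfolding t_def by auto
  have "interval_err a b B = interval_err a b (insert t A)"
  proof (rule interval_err_cong, rule min_sqdist_subset_eq)
    fix x u assume x: "x \<in> {a..b}" and u: "u \<in> B"
    show "\<exists>s\<in>insert t A. \<bar>x - s\<bar> \<le> \<bar>x - u\<bar>"
    proof (cases "u \<in> A")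
      case False
      then have "t \<le> u" "b + r \<le> t" using t far u by auto
      then show ?thesis using x assms(5) by auto
    qed auto
  qed (use assms t in auto)
  moreover obtain c where c: "a \<le> c" "c \<le> b"
    and "interval_err a b (insert t A) = interval_err a c A + integral {c..b} (\<lambda>x. (x - t)\<^sup>2)"
    using interval_err_split_max[OF fin(1) assms(3) _ assms(4)] order t by blast
  moreover have "(b - c) * r\<^sup>2 \<le> integral {c..b} (\<lambda>x. (x - t)\<^sup>2)"
    using c far t assms(5) by (intro integral_power2_shift_ge_far) auto
  ultimately show ?thesis using that[OF c] by simp
qed

lemma interval_err_far_left:
  assumes "finite B" "A \<subseteq> B" "A \<noteq> {}" "a \<le> b" "0 \<le> r"
    and far: "\<forall>t\<in>B - A. t \<le> a - r" and order: "\<forall>s\<in>A. \<forall>t\<in>B - A. t < s"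
  obtains c where "a \<le> c" "c \<le> b" "(c - a) * r\<^sup>2 + interval_err c b A \<le> interval_err a b B"
proof -
  have diff: "uminus ` B - uminus ` A = uminus ` (B - A)" by (simp add: image_set_diff)
  obtain c where c: "- b \<le> c" "c \<le> - a"
    "interval_err (- b) c (uminus ` A) + (- a - c) * r\<^sup>2 \<le> interval_err (- b) (- a) (uminus ` B)"
  proof (rule interval_err_far_right[of "uminus ` B" "uminus ` A" "- b" "- a" r])
    show "\<forall>t\<in>uminus ` B - uminus ` A. - a + r \<le> t" using far unfolding diff by force
    show "\<forall>s\<in>uminus ` A. \<forall>t\<in>uminus ` B - uminus ` A. s < t" using order unfolding diff by force
  qed (use assms in auto)
  moreover have "interval_err (- b) c (uminus ` A) = interval_err (- c) b A"
    using interval_err_reflect[of b "- c" A] by simp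
  ultimately show ?thesis using that[of "- c"] by (simp add: interval_err_reflect algebra_simps)
qed

lemma interval_err_isolated_split:
  assumes "finite B" "N \<subseteq> B" "N \<noteq> {}" "a \<le> b" "0 < r"
    and far: "\<forall>t\<in>B - N. t \<le> a - r \<or> b + r \<le> t"
    and order: "\<forall>s\<in>N. \<forall>t\<in>B - N. (t \<le> a - r \<longrightarrow> t < s) \<and> (b + r \<le> t \<longrightarrow> s < t)"
  obtains c' c where "a \<le> c'" "c' \<le> c" "c \<le> b"
    "(c' - a) * r\<^sup>2 + interval_err c' c N + (b - c) * r\<^sup>2 \<le> interval_err a b B"
proof -
  define A where "A = {t \<in> B. t \<in> N \<or> t \<le> a - r}"
  have A: "N \<subseteq> A" "A \<subseteq> B" "finite A" "A \<noteq> {}"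
    using assms(1-3) finite_subset unfolding A_def by auto
  have right: "b + r \<le> t" if "t \<in> B - A" for t
    using that far unfolding A_def by auto
  have "s < t" if "s \<in> A" "t \<in> B - A" for s t
  proof (cases "s \<in> N")
    case True
    then show ?thesis using order right[OF that(2)] that(2) unfolding A_def by auto
  next
    case False
    then have "s \<le> a - r" using that(1) unfolding A_def by auto
    then show ?thesis using right[OF that(2)] assms(4,5) by linarith
  qed
  then obtain c where c: "a \<le> c" "c \<le> b" "interval_err a c A + (b - c) * r\<^sup>2 \<le> interval_err a b B"
    using interval_err_far_right[OF assms(1) A(2,4) assms(4)] right assms(5) by (metis less_imp_le)
  have left: "t \<le> a - r" if "t \<in> A - N" for t
    using that unfolding A_def by auto
  have "t < s" if "s \<in> N" "t \<in> A - N" for s t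
    using that order left[OF that(2)] A(2) by blast
  then obtain c' where "a \<le> c'" "c' \<le> c" "(c' - a) * r\<^sup>2 + interval_err c' c N \<le> interval_err a c A"
    using interval_err_far_left[OF A(3,1) assms(3) c(1)] left assms(5) by (metis less_imp_le)
  with c show ?thesis using that by fastforce
qed

lemma interval_err_isolated_lower_bound:
  assumes "finite B" "N \<subseteq> B" "N \<noteq> {}" "a < b" "0 < r" "b - a \<le> 2 * r"
    and "\<forall>t\<in>B - N. t \<le> a - r \<or> b + r \<le> t"
    and "\<forall>s\<in>N. \<forall>t\<in>B - N. (t \<le> a - r \<longrightarrow> t < s) \<and> (b + r \<le> t \<longrightarrow> s < t)"
  shows "(b - a)^3 / (12 * (real (card N))\<^sup>2) \<le> interval_err a b B"
    and "s \<in> N \<Longrightarrow> s < a \<or> b < s \<Longrightarrow> (b - a)^3 / (12 * (real (card N))\<^sup>2) < interval_err a b B"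
proof -
  obtain c' c where cc: "a \<le> c'" "c' \<le> c" "c \<le> b"
    and split: "(c' - a) * r\<^sup>2 + interval_err c' c N + (b - c) * r\<^sup>2 \<le> interval_err a b B"
    using interval_err_isolated_split[OF assms(1-3) less_imp_le[OF assms(4)] assms(5,7,8)] by blast
  have fin: "finite N" using assms(1,2) finite_subset by blast
  have k: "1 \<le> card N" using fin assms(3) by (simp add: Suc_le_eq card_gt_0_iff)
  have L: "(b - a)\<^sup>2 \<le> 4 * r\<^sup>2" using power_mono[OF assms(6), of 2] assms(4) by (simp add: power_mult_distrib)
  have rest: "(c' - a) * r\<^sup>2 + (b - c) * r\<^sup>2 = ((b - a) - (c - c')) * r\<^sup>2" by (simp add: algebra_simps)
  have "(b - a)^3 / (12 * (real (card N))\<^sup>2)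
      \<le> (c - c')^3 / (12 * (real (card N))\<^sup>2) + ((b - a) - (c - c')) * r\<^sup>2"
    using cc k L by (intro cube_split_le) auto
  moreover have "(c - c')^3 / (12 * (real (card N))\<^sup>2) \<le> interval_err c' c N"
    using interval_err_lower_bound[OF fin assms(3) cc(2)] .
  ultimately show "(b - a)^3 / (12 * (real (card N))\<^sup>2) \<le> interval_err a b B"
    using split rest by linarith
  assume "s \<in> N" "s < a \<or> b < s"
  then have "(c - c')^3 / (12 * (real (card N) - 1/2)\<^sup>2) \<le> interval_err c' c N"
    using cc by (intro interval_err_lower_bound_outside[OF fin]) auto
  moreover have "(b - a)^3 / (12 * (real (card N))\<^sup>2)
      < (c - c')^3 / (12 * (real (card N) - 1/2)\<^sup>2) + ((b - a) - (c - c')) * r\<^sup>2"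
    using cc k L assms(4) by (intro cube_split_less) auto
  ultimately show "(b - a)^3 / (12 * (real (card N))\<^sup>2) < interval_err a b B"
    using split rest by linarith
qed

section \<open>Uniform codebooks\<close>

definition uniform_codebook :: "real \<Rightarrow> real \<Rightarrow> nat \<Rightarrow> real set" where
  "uniform_codebook a h k = (\<lambda>i. a + (real i + 1/2) * h) ` {..<k}"

lemma finite_uniform_codebook [simp]: "finite (uniform_codebook a h k)"
  unfolding uniform_codebook_def by simp

lemma uniform_codebook_Suc:
  "uniform_codebook a h (Suc k) = insert (a + (real k + 1/2) * h) (uniform_codebook a h k)"
  unfolding uniform_codebook_def by (simp add: lessThan_Suc)

lemma card_uniform_codebook: "h \<noteq> 0 \<Longrightarrow> card (uniform_codebook a h k) = k"
  unfolding uniform_codebook_def by (subst card_image) (auto simp: inj_on_def)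

lemma uniform_codebook_subset:
  assumes "0 \<le> h" shows "uniform_codebook a h k \<subseteq> {a..a + real k * h}"
proof
  fix x assume "x \<in> uniform_codebook a h k"
  then obtain i where "i < k" "x = a + (real i + 1/2) * h" unfolding uniform_codebook_def by auto
  moreover have "(real i + 1/2) * h \<le> real k * h" if "i < k"
    using that assms by (intro mult_right_mono) auto
  ultimately show "x \<in> {a..a + real k * h}" using assms by auto
qed

lemma interval_err_uniform_codebook_le:
  assumes "1 \<le> k" "0 \<le> h"
  shows "interval_err a (a + real k * h) (uniform_codebook a h k) \<le> real k * h^3 / 12"
  using assms(1)
proof (induction k rule: nat_induct_at_least)
  case base
  have "uniform_codebook a h 1 = {a + h/2}" unfolding uniform_codebook_def by (simp add: lessThan_Suc)
  then show ?case using assms(2) by (simp add: interval_err_singleton power3_eq_cube field_simps)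
next
  case (Suc k)
  let ?Q = "uniform_codebook a h k" and ?t = "a + (real k + 1/2) * h" and ?m = "a + real k * h"
  have Q: "finite ?Q" "?Q \<noteq> {}" using Suc.hyps by (auto simp: uniform_codebook_def lessThan_empty_iff)
  have top: "a + real (Suc k) * h = ?m + h" by (simp add: algebra_simps)
  have "interval_err a (?m + h) (insert ?t ?Q)
      = interval_err a ?m (insert ?t ?Q) + interval_err ?m (?m + h) (insert ?t ?Q)"
    using Q assms(2) by (intro interval_err_combine) auto
  also have "\<dots> \<le> interval_err a ?m ?Q + ((?m + h - ?t)^3 - (?m - ?t)^3) / 3"
  proof (rule add_mono)
    show "interval_err a ?m (insert ?t ?Q) \<le> interval_err a ?m ?Q"
      using Q by (intro interval_err_antimono) auto
    show "interval_err ?m (?m + h) (insert ?t ?Q) \<le> ((?m + h - ?t)^3 - (?m - ?t)^3) / 3"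
      using Q assms(2) by (intro interval_err_le_point) auto
  qed
  also have "\<dots> \<le> real k * h^3 / 12 + h^3 / 12"
    using Suc.IH by (simp add: power3_eq_cube field_simps)
  finally show ?case unfolding top uniform_codebook_Suc by (simp add: algebra_simps add_divide_distrib)
qed

lemma uniform_codebook_interval:
  assumes "a < b" "1 \<le> k"
  defines "Q \<equiv> uniform_codebook a ((b - a) / real k) k"
  shows "finite Q" "Q \<noteq> {}" "card Q = k" "Q \<subseteq> {a..b}"
    and "interval_err a b Q \<le> (b - a)^3 / (12 * (real k)\<^sup>2)"
proof -
  have k: "real k * ((b - a) / real k) = b - a" using assms by simp
  show "finite Q" unfolding Q_def by simp
  show "card Q = k" unfolding Q_def using assms by (intro card_uniform_codebook) simp
  then show "Q \<noteq> {}" using assms by auto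
  show "Q \<subseteq> {a..b}" unfolding Q_def using uniform_codebook_subset[of "(b - a) / real k" a k] assms k
    by simp
  have "interval_err a b Q \<le> real k * ((b - a) / real k)^3 / 12"
    using interval_err_uniform_codebook_le[of k "(b - a) / real k" a] assms k unfolding Q_def by simp
  also have "\<dots> = (b - a)^3 / (12 * (real k)\<^sup>2)"
    using assms by (simp add: power3_eq_cube power2_eq_square field_simps)
  finally show "interval_err a b Q \<le> (b - a)^3 / (12 * (real k)\<^sup>2)" .
qed

section \<open>Errors with respect to \<open>P\<close>\<close>

lemma borel_measurable_dens [measurable]: "dens \<in> borel_measurable borel"
  unfolding dens_def J1_def J2_def J3_def by measurable

lemma nn_integral_P:
  "g \<in> borel_measurable borel \<Longrightarrow> (\<integral>\<^sup>+x. g x \<partial>P) = (\<integral>\<^sup>+x. ennreal (dens x) * g x \<partial>lborel)"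
  unfolding P_def by (rule nn_integral_density) auto

lemma dist_err_P_lborel:
  assumes "finite B" "B \<noteq> {}" "J \<in> sets borel"
  shows "dist_err P B J = (\<integral>\<^sup>+x. ennreal (dens x) * (ennreal (min_sqdist B x) * indicator J x) \<partial>lborel)"
  unfolding dist_err_def min_sqdist_def[symmetric]
  using assms by (intro nn_integral_P borel_measurable_times_ennreal borel_measurable_indicator
      measurable_compose[OF _ measurable_ennreal] borel_measurable_min_sqdist)

lemma dist_err_P_interval:
  assumes "finite B" "B \<noteq> {}" "\<And>x. x \<in> {a..b} \<Longrightarrow> dens x = c" "0 \<le> c"
  shows "dist_err P B {a..b} = ennreal (c * interval_err a b B)"
proof -
  have "dist_err P B {a..b}
      = (\<integral>\<^sup>+x. ennreal (dens x) * (ennreal (min_sqdist B x) * indicator {a..b} x) \<partial>lborel)"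
    using assms(1,2) by (intro dist_err_P_lborel) auto
  also have "\<dots> = (\<integral>\<^sup>+x. ennreal (c * min_sqdist B x) * indicator {a..b} x \<partial>lborel)"
    using assms by (intro nn_integral_cong) (auto simp: ennreal_mult'' min_sqdist_nonneg indicator_def)
  also have "\<dots> = ennreal (c * interval_err a b B)"
    unfolding interval_err_def using assms min_sqdist_nonneg[OF assms(1,2)]
    by (intro nn_integral_has_integral_lebesgue' has_integral_mult_right integrable_integral
        min_sqdist_integrable) auto
  finally show ?thesis .
qed

lemma emeasure_P_interval:
  assumes "a \<le> b" "\<And>x. x \<in> {a..b} \<Longrightarrow> dens x = c" "0 \<le> c"
  shows "emeasure P {a..b} = ennreal (c * (b - a))"
proof -
  have "emeasure P {a..b} = (\<integral>\<^sup>+x. ennreal (dens x) * indicator {a..b} x \<partial>lborel)"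
    unfolding P_def by (rule emeasure_density) auto
  also have "\<dots> = (\<integral>\<^sup>+x. ennreal c * indicator {a..b} x \<partial>lborel)"
    using assms by (intro nn_integral_cong) (auto simp: indicator_def)
  also have "\<dots> = ennreal (c * (b - a))"
    using has_integral_const_real[of c a b] assms
    by (intro nn_integral_has_integral_lebesgue') (auto simp: mult.commute)
  finally show ?thesis .
qed

lemma quant_err_cond_P_interval:
  assumes "finite B" "B \<noteq> {}" "a < b" "\<And>x. x \<in> {a..b} \<Longrightarrow> dens x = c" "0 < c"
  shows "quant_err (cond_measure P {a..b}) B = ennreal (interval_err a b B / (b - a))"
proof -
  have "quant_err (cond_measure P {a..b}) B = dist_err P B {a..b} / emeasure P {a..b}"
    unfolding quant_err_def dist_err_def
    using measurable_compose[OF borel_measurable_min_sqdist[OF assms(1,2)] measurable_ennreal]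
    by (intro nn_integral_uniform_measure) (auto simp: P_def min_sqdist_def)
  also have "\<dots> = ennreal (c * interval_err a b B) / ennreal (c * (b - a))"
    using dist_err_P_interval[OF assms(1,2,4)] emeasure_P_interval[of a b c] assms by simp
  also have "\<dots> = ennreal (interval_err a b B / (b - a))"
    using assms interval_err_nonneg[OF assms(1,2)] by (subst divide_ennreal) auto
  finally show ?thesis .
qed

lemma optimal_n_means_cond_P_interval:
  assumes "a < b" "\<And>x. x \<in> {a..b} \<Longrightarrow> dens x = c" "0 < c" "finite S" "S \<noteq> {}"
    and "interval_err a b S = (b - a)^3 / (12 * (real (card S))\<^sup>2)"
  shows "optimal_n_means (cond_measure P {a..b}) (card S) S"
proof -
  let ?Q = "cond_measure P {a..b}"
  have S: "S \<in> codebooks (card S)" using assms(4,5) unfolding codebooks_def by auto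
  have "quant_err ?Q S \<le> quant_err ?Q B" if "B \<in> codebooks (card S)" for B
  proof -
    from that have B: "finite B" "B \<noteq> {}" "card B \<le> card S" unfolding codebooks_def by auto
    have "interval_err a b S \<le> (b - a)^3 / (12 * (real (card B))\<^sup>2)"
      unfolding assms(6) using B assms(1,4,5) by (intro divide_left_mono) (auto simp: card_gt_0_iff)
    also have "\<dots> \<le> interval_err a b B" using interval_err_lower_bound[OF B(1,2)] assms(1) by simp
    finally have "ennreal (interval_err a b S / (b - a)) \<le> ennreal (interval_err a b B / (b - a))"
      using assms(1) by (intro ennreal_leI divide_right_mono) auto
    then show ?thesis
      using quant_err_cond_P_interval[OF assms(4,5,1-3)] quant_err_cond_P_interval[OF B(1,2) assms(1-3)]
      by simp
  qed
  then have "quant_err ?Q S = Vn ?Q (card S)"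
    unfolding Vn_def using S by (intro antisym INF_greatest INF_lower) auto
  then show ?thesis using S unfolding optimal_n_means_def by simp
qed

lemma dens_J:
  "x \<in> J1 \<Longrightarrow> dens x = 3/2" "x \<in> J2 \<Longrightarrow> dens x = 9/4" "x \<in> J3 \<Longrightarrow> dens x = 9/4"
  unfolding dens_def J1_def J2_def J3_def by auto

definition err_P :: "real set \<Rightarrow> real" where
  "err_P B = 3/2 * interval_err 0 (1/3) B + 9/4 * interval_err (2/3) (7/9) B + 9/4 * interval_err (8/9) 1 B"

lemma quant_err_P_split:
  assumes "finite B" "B \<noteq> {}"
  shows "quant_err P B = dist_err P B J1 + dist_err P B J2 + dist_err P B J3"
proof -
  let ?f = "\<lambda>J x. ennreal (dens x) * (ennreal (min_sqdist B x) * indicator J x)"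
  have meas: "?f J \<in> borel_measurable borel" if "J \<in> sets borel" for J
    using assms that by (intro borel_measurable_times_ennreal borel_measurable_indicator
        measurable_compose[OF _ measurable_ennreal] borel_measurable_min_sqdist) auto
  have J: "J1 \<in> sets borel" "J2 \<in> sets borel" "J3 \<in> sets borel"
    unfolding J1_def J2_def J3_def by auto
  have "quant_err P B = (\<integral>\<^sup>+x. ennreal (dens x) * ennreal (min_sqdist B x) \<partial>lborel)"
    unfolding quant_err_def min_sqdist_def[symmetric] using assms
    by (intro nn_integral_P measurable_compose[OF _ measurable_ennreal] borel_measurable_min_sqdist)
  also have "\<dots> = (\<integral>\<^sup>+x. ?f J1 x + ?f J2 x + ?f J3 x \<partial>lborel)"
    by (intro nn_integral_cong) (auto simp: dens_def J1_def J2_def J3_def indicator_def)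
  also have "\<dots> = integral\<^sup>N lborel (?f J1) + integral\<^sup>N lborel (?f J2) + integral\<^sup>N lborel (?f J3)"
    using meas[OF J(1)] meas[OF J(2)] meas[OF J(3)] by (simp add: nn_integral_add)
  also have "\<dots> = dist_err P B J1 + dist_err P B J2 + dist_err P B J3"
    using J by (simp add: dist_err_P_lborel[OF assms])
  finally show ?thesis .
qed

lemma dist_err_P_J:
  assumes "finite B" "B \<noteq> {}"
  shows "dist_err P B J1 = ennreal (3/2 * interval_err 0 (1/3) B)"
    and "dist_err P B J2 = ennreal (9/4 * interval_err (2/3) (7/9) B)"
    and "dist_err P B J3 = ennreal (9/4 * interval_err (8/9) 1 B)"
proof -
  show "dist_err P B J1 = ennreal (3/2 * interval_err 0 (1/3) B)"
    using dens_J(1) unfolding J1_def by (intro dist_err_P_interval[OF assms]) auto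
  show "dist_err P B J2 = ennreal (9/4 * interval_err (2/3) (7/9) B)"
    using dens_J(2) unfolding J2_def by (intro dist_err_P_interval[OF assms]) auto
  show "dist_err P B J3 = ennreal (9/4 * interval_err (8/9) 1 B)"
    using dens_J(3) unfolding J3_def by (intro dist_err_P_interval[OF assms]) auto
qed

lemma quant_err_P:
  assumes "finite B" "B \<noteq> {}"
  shows "quant_err P B = ennreal (err_P B)"
  unfolding quant_err_P_split[OF assms] dist_err_P_J[OF assms] err_P_def
  using interval_err_nonneg[OF assms] by (simp add: ennreal_plus[symmetric] del: ennreal_plus)

section \<open>Optimal codebooks for \<open>P\<close>\<close>

text \<open>\<open>1/2\<close> and \<open>5/6\<close> are the midpoints of the gaps \<open>(1/3, 2/3)\<close> and \<open>(7/9, 8/9)\<close>.\<close>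

definition near_J1 :: "real set \<Rightarrow> real set" where "near_J1 B = {t \<in> B. t < 1/2}"
definition near_J2 :: "real set \<Rightarrow> real set" where "near_J2 B = {t \<in> B. 1/2 \<le> t \<and> t \<le> 5/6}"
definition near_J3 :: "real set \<Rightarrow> real set" where "near_J3 B = {t \<in> B. 5/6 < t}"

lemmas near_J_defs = near_J1_def near_J2_def near_J3_def

lemma near_J_cases: "u \<in> B \<Longrightarrow> u \<in> near_J1 B \<or> u \<in> near_J2 B \<or> u \<in> near_J3 B"
  unfolding near_J_defs by auto

lemma card_near_J:
  assumes "finite B"
  shows "card B = card (near_J1 B) + card (near_J2 B) + card (near_J3 B)"
proof -
  have "B = (near_J1 B \<union> near_J2 B) \<union> near_J3 B" unfolding near_J_defs by auto
  moreover have "card (near_J1 B \<union> near_J2 B) = card (near_J1 B) + card (near_J2 B)"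
    using assms by (intro card_Un_disjoint) (auto simp: near_J_defs)
  moreover have "card ((near_J1 B \<union> near_J2 B) \<union> near_J3 B) = card (near_J1 B \<union> near_J2 B) + card (near_J3 B)"
    using assms by (intro card_Un_disjoint) (auto simp: near_J_defs)
  ultimately show ?thesis by simp
qed

definition err_formula :: "nat \<Rightarrow> nat \<Rightarrow> nat \<Rightarrow> real" where
  "err_formula m1 m2 m3 = 1/216 * (1 / (real m1)\<^sup>2) + 1/3888 * (1 / (real m2)\<^sup>2 + 1 / (real m3)\<^sup>2)"

lemma weighted_isolated_lower_bound:
  assumes "finite B" "N \<subseteq> B" "N \<noteq> {}" "a < b" "0 < r" "b - a \<le> 2 * r"
    and "\<forall>t\<in>B - N. t \<le> a - r \<or> b + r \<le> t"
    and "\<forall>s\<in>N. \<forall>t\<in>B - N. (t \<le> a - r \<longrightarrow> t < s) \<and> (b + r \<le> t \<longrightarrow> s < t)"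
    and "0 < c" "w = c * (b - a)^3 / 12"
  shows "w * (1 / (real (card N))\<^sup>2) \<le> c * interval_err a b B"
    and "\<exists>s\<in>N. s \<notin> {a..b} \<Longrightarrow> w * (1 / (real (card N))\<^sup>2) < c * interval_err a b B"
proof -
  have w: "w * (1 / (real (card N))\<^sup>2) = c * ((b - a)^3 / (12 * (real (card N))\<^sup>2))"
    by (simp add: assms(10))
  show "w * (1 / (real (card N))\<^sup>2) \<le> c * interval_err a b B"
    unfolding w using interval_err_isolated_lower_bound(1)[OF assms(1-8)] assms(9)
    by (intro mult_left_mono) auto
  assume "\<exists>s\<in>N. s \<notin> {a..b}"
  then obtain s where "s \<in> N" "s < a \<or> b < s" by auto
  then show "w * (1 / (real (card N))\<^sup>2) < c * interval_err a b B"
    unfolding w using interval_err_isolated_lower_bound(2)[OF assms(1-8)] assms(9)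
    by (intro mult_strict_left_mono) auto
qed

lemma near_J_lower_bounds:
  assumes "finite B"
  shows "near_J1 B \<noteq> {} \<Longrightarrow> 1/216 * (1 / (real (card (near_J1 B)))\<^sup>2) \<le> 3/2 * interval_err 0 (1/3) B"
    and "near_J2 B \<noteq> {} \<Longrightarrow> 1/3888 * (1 / (real (card (near_J2 B)))\<^sup>2) \<le> 9/4 * interval_err (2/3) (7/9) B"
    and "near_J3 B \<noteq> {} \<Longrightarrow> 1/3888 * (1 / (real (card (near_J3 B)))\<^sup>2) \<le> 9/4 * interval_err (8/9) 1 B"
    and "\<exists>s\<in>near_J1 B. s \<notin> J1 \<Longrightarrow> 1/216 * (1 / (real (card (near_J1 B)))\<^sup>2) < 3/2 * interval_err 0 (1/3) B"
    and "\<exists>s\<in>near_J2 B. s \<notin> J2 \<Longrightarrow> 1/3888 * (1 / (real (card (near_J2 B)))\<^sup>2) < 9/4 * interval_err (2/3) (7/9) B"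
    and "\<exists>s\<in>near_J3 B. s \<notin> J3 \<Longrightarrow> 1/3888 * (1 / (real (card (near_J3 B)))\<^sup>2) < 9/4 * interval_err (8/9) 1 B"
proof -
  note J1 = weighted_isolated_lower_bound[OF assms, of "near_J1 B" 0 "1/3" "1/6" "3/2" "1/216"]
  note J2 = weighted_isolated_lower_bound[OF assms, of "near_J2 B" "2/3" "7/9" "1/18" "9/4" "1/3888"]
  note J3 = weighted_isolated_lower_bound[OF assms, of "near_J3 B" "8/9" 1 "1/18" "9/4" "1/3888"]
  show "near_J1 B \<noteq> {} \<Longrightarrow> 1/216 * (1 / (real (card (near_J1 B)))\<^sup>2) \<le> 3/2 * interval_err 0 (1/3) B"
    by (rule J1(1)) (auto simp: near_J_defs power_divide)
  show "near_J2 B \<noteq> {} \<Longrightarrow> 1/3888 * (1 / (real (card (near_J2 B)))\<^sup>2) \<le> 9/4 * interval_err (2/3) (7/9) B"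
    by (rule J2(1)) (auto simp: near_J_defs power_divide)
  show "near_J3 B \<noteq> {} \<Longrightarrow> 1/3888 * (1 / (real (card (near_J3 B)))\<^sup>2) \<le> 9/4 * interval_err (8/9) 1 B"
    by (rule J3(1)) (auto simp: near_J_defs power_divide)
  show "\<exists>s\<in>near_J1 B. s \<notin> J1 \<Longrightarrow> 1/216 * (1 / (real (card (near_J1 B)))\<^sup>2) < 3/2 * interval_err 0 (1/3) B"
    by (rule J1(2)) (auto simp: near_J_defs J1_def power_divide)
  show "\<exists>s\<in>near_J2 B. s \<notin> J2 \<Longrightarrow> 1/3888 * (1 / (real (card (near_J2 B)))\<^sup>2) < 9/4 * interval_err (2/3) (7/9) B"
    by (rule J2(2)) (auto simp: near_J_defs J2_def power_divide)
  show "\<exists>s\<in>near_J3 B. s \<notin> J3 \<Longrightarrow> 1/3888 * (1 / (real (card (near_J3 B)))\<^sup>2) < 9/4 * interval_err (8/9) 1 B"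
    by (rule J3(2)) (auto simp: near_J_defs J3_def power_divide)
qed

lemma near_J_empty_lower_bounds:
  assumes "finite B" "B \<noteq> {}"
  shows "near_J1 B = {} \<Longrightarrow> 13/216 \<le> 3/2 * interval_err 0 (1/3) B"
    and "near_J2 B = {} \<Longrightarrow> 13/3888 \<le> 9/4 * interval_err (2/3) (7/9) B"
    and "near_J3 B = {} \<Longrightarrow> 13/3888 \<le> 9/4 * interval_err (8/9) 1 B"
proof -
  assume "near_J1 B = {}"
  then have "((1/3 - 1/2)^3 - (0 - 1/2)^3) / 3 \<le> interval_err 0 (1/3) B"
    by (intro interval_err_ge_nearest[OF _ assms]) (auto simp: near_J_defs)
  then show "13/216 \<le> 3/2 * interval_err 0 (1/3) B" by (simp add: power_divide)
next
  assume "near_J2 B = {}"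
  then have "((7/9 - 5/6)^3 - (2/3 - 5/6)^3) / 3 \<le> interval_err (2/3) (7/9) B"
    by (intro interval_err_ge_nearest[OF _ assms]) (auto simp: near_J_defs, force)
  then show "13/3888 \<le> 9/4 * interval_err (2/3) (7/9) B" by (simp add: power_divide)
next
  assume "near_J3 B = {}"
  then have "((1 - 5/6)^3 - (8/9 - 5/6)^3) / 3 \<le> interval_err (8/9) 1 B"
    by (intro interval_err_ge_nearest[OF _ assms]) (auto simp: near_J_defs)
  then show "13/3888 \<le> 9/4 * interval_err (8/9) 1 B" by (simp add: power_divide)
qed

lemma err_P_ge_if_near_empty:
  assumes "finite B" "B \<noteq> {}" "near_J1 B = {} \<or> near_J2 B = {} \<or> near_J3 B = {}"
  shows "13/3888 \<le> err_P B"
proof -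
  have "0 \<le> interval_err 0 (1/3) B" "0 \<le> interval_err (2/3) (7/9) B" "0 \<le> interval_err (8/9) 1 B"
    using interval_err_nonneg[OF assms(1,2)] by auto
  with assms(3) near_J_empty_lower_bounds[OF assms(1,2)] show ?thesis
    unfolding err_P_def by (elim disjE) fastforce+
qed

text \<open>For \<open>n = 3\<close> the bound of \<open>err_P_ge_if_near_empty\<close> does not beat \<open>err_formula 1 1 1\<close>;
  configurations with two points left of \<open>1/2\<close> need the finer estimates below.\<close>

lemma err_formula_111: "err_formula 1 1 1 = 20/3888"
  unfolding err_formula_def by simp

lemma err_P_gt_if_near_J2_empty:
  assumes "finite B" "card (near_J1 B) = 2" "near_J2 B = {}" "near_J3 B = {t}"
  shows "err_formula 1 1 1 < err_P B"
proof -
  have ne: "B \<noteq> {}" using assms(4) unfolding near_J_defs by auto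
  have J1: "1/864 \<le> 3/2 * interval_err 0 (1/3) B"
    using near_J_lower_bounds(1)[OF assms(1)] assms(2) by fastforce
  have B: "u < 1/2 \<or> u = t" if "u \<in> B" for u
    using near_J_cases[OF that] assms(3,4) unfolding near_J1_def by auto
  have t: "5/6 < t" using assms(4) unfolding near_J_defs by auto
  have nn: "0 \<le> interval_err (2/3) (7/9) B" "0 \<le> interval_err (8/9) 1 B"
    using interval_err_nonneg[OF assms(1) ne] by auto
  show ?thesis
  proof (cases "t < 8/9")
    case True
    have "((1 - 8/9)^3 - (8/9 - 8/9)^3) / 3 \<le> interval_err (8/9) 1 B"
      using B True by (intro interval_err_ge_nearest[OF _ assms(1) ne]) fastforce+
    moreover have "13/3888 \<le> 9/4 * interval_err (2/3) (7/9) B"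
      by (rule near_J_empty_lower_bounds(2)[OF assms(1) ne assms(3)])
    ultimately show ?thesis using J1 unfolding err_P_def err_formula_111 by (simp add: power_divide)
  next
    case False
    have "((7/9 - 8/9)^3 - (25/36 - 8/9)^3) / 3 \<le> interval_err (25/36) (7/9) B"
      using B False by (intro interval_err_ge_nearest[OF _ assms(1) ne]) fastforce+
    moreover have "interval_err (25/36) (7/9) B \<le> interval_err (2/3) (7/9) B"
      by (rule interval_err_subinterval_le[OF assms(1) ne]) auto
    ultimately show ?thesis using J1 nn unfolding err_P_def err_formula_111 by (simp add: power_divide)
  qed
qed

lemma err_P_gt_if_near_J3_empty:
  assumes "finite B" "card (near_J1 B) = 2" "near_J3 B = {}" "near_J2 B = {s}"
  shows "err_formula 1 1 1 < err_P B"
proof -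
  have ne: "B \<noteq> {}" using assms(4) unfolding near_J_defs by auto
  have J1: "1/864 \<le> 3/2 * interval_err 0 (1/3) B"
    using near_J_lower_bounds(1)[OF assms(1)] assms(2) by fastforce
  have B: "u < 1/2 \<or> u = s" if "u \<in> B" for u
    using near_J_cases[OF that] assms(3,4) unfolding near_J1_def by auto
  have nn: "0 \<le> interval_err (2/3) (7/9) B" "0 \<le> interval_err (8/9) 1 B"
    using interval_err_nonneg[OF assms(1) ne] by auto
  show ?thesis
  proof (cases "s \<le> 7/9")
    case True
    have "((1 - 7/9)^3 - (8/9 - 7/9)^3) / 3 \<le> interval_err (8/9) 1 B"
      using B True by (intro interval_err_ge_nearest[OF _ assms(1) ne]) fastforce+
    then show ?thesis using J1 nn unfolding err_P_def err_formula_111 by (simp add: power_divide)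
  next
    case False
    have "((7/9 - 7/9)^3 - (2/3 - 7/9)^3) / 3 \<le> interval_err (2/3) (7/9) B"
      using B False by (intro interval_err_ge_nearest[OF _ assms(1) ne]) fastforce+
    moreover have "13/3888 \<le> 9/4 * interval_err (8/9) 1 B"
      by (rule near_J_empty_lower_bounds(3)[OF assms(1) ne assms(3)])
    ultimately show ?thesis using J1 unfolding err_P_def err_formula_111 by (simp add: power_divide)
  qed
qed

lemma err_P_gt_if_near_J1_crowded:
  assumes "finite B" "2 \<le> card (near_J1 B)"
    and card: "card (near_J1 B) + card (near_J2 B) + card (near_J3 B) \<le> 3"
  shows "err_formula 1 1 1 < err_P B"
proof -
  have ne: "B \<noteq> {}" using assms(2) unfolding near_J1_def by auto
  have fin: "finite (near_J2 B)" "finite (near_J3 B)" using assms(1) unfolding near_J_defs by auto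
  consider "near_J2 B = {}" "near_J3 B = {}" | t where "near_J2 B = {}" "near_J3 B = {t}"
    | s where "near_J3 B = {}" "near_J2 B = {s}"
  proof -
    have "card (near_J2 B) = 0 \<and> card (near_J3 B) = 0 \<or> card (near_J2 B) = 0 \<and> card (near_J3 B) = 1
        \<or> card (near_J3 B) = 0 \<and> card (near_J2 B) = 1"
      using assms(2) card by linarith
    then show ?thesis using that fin by (auto simp: card_1_singleton_iff)
  qed
  then show ?thesis
  proof cases
    case 1
    then show ?thesis
      using near_J_empty_lower_bounds(2,3)[OF assms(1) ne] interval_err_nonneg[OF assms(1) ne, of 0 "1/3"]
      unfolding err_P_def err_formula_111 by fastforce
  next
    case (2 t)
    then have "card (near_J1 B) = 2" using assms(2) card by simp
    then show ?thesis using err_P_gt_if_near_J2_empty[OF assms(1)] 2 by blast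
  next
    case (3 s)
    then have "card (near_J1 B) = 2" using assms(2) card by simp
    then show ?thesis using err_P_gt_if_near_J3_empty[OF assms(1)] 3 by blast
  qed
qed

lemma err_P_gt_if_near_empty_three_points:
  assumes "finite B" "B \<noteq> {}" "card B \<le> 3" "near_J1 B = {} \<or> near_J2 B = {} \<or> near_J3 B = {}"
  shows "err_formula 1 1 1 < err_P B"
proof -
  note empty = near_J_empty_lower_bounds[OF assms(1,2)]
  have nn: "0 \<le> interval_err 0 (1/3) B" "0 \<le> interval_err (2/3) (7/9) B" "0 \<le> interval_err (8/9) 1 B"
    using interval_err_nonneg[OF assms(1,2)] by auto
  have card: "card (near_J1 B) + card (near_J2 B) + card (near_J3 B) \<le> 3"
    using card_near_J[OF assms(1)] assms(3) by simp
  have "finite (near_J1 B)" using assms(1) unfolding near_J1_def by auto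
  then consider "near_J1 B = {}" | "card (near_J1 B) = 1" | "2 \<le> card (near_J1 B)"
    by (cases "card (near_J1 B) \<le> 1") (auto simp: le_Suc_eq)
  then show ?thesis
  proof cases
    case 1
    then show ?thesis using empty(1) nn unfolding err_P_def err_formula_111 by linarith
  next
    case 2
    then have "1/216 \<le> 3/2 * interval_err 0 (1/3) B"
      using near_J_lower_bounds(1)[OF assms(1)] by fastforce
    moreover have "near_J2 B = {} \<or> near_J3 B = {}" using assms(4) 2 by auto
    ultimately show ?thesis using empty(2,3) nn unfolding err_P_def err_formula_111 by fastforce
  next
    case 3
    then show ?thesis using err_P_gt_if_near_J1_crowded[OF assms(1) _ card] by blast
  qed
qed

lemma near_J_nonempty:
  assumes "finite B" "B \<noteq> {}" "card B \<le> n" "3 \<le> n"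
    and le: "\<And>m1 m2 m3. 1 \<le> m1 \<Longrightarrow> 1 \<le> m2 \<Longrightarrow> 1 \<le> m3 \<Longrightarrow> m1 + m2 + m3 \<le> n \<Longrightarrow>
      err_P B \<le> err_formula m1 m2 m3"
  shows "near_J1 B \<noteq> {} \<and> near_J2 B \<noteq> {} \<and> near_J3 B \<noteq> {}"
proof (rule ccontr)
  assume empty: "\<not> (near_J1 B \<noteq> {} \<and> near_J2 B \<noteq> {} \<and> near_J3 B \<noteq> {})"
  show False
  proof (cases "n = 3")
    case True
    then show False
      using err_P_gt_if_near_empty_three_points[OF assms(1,2)] le[of 1 1 1] assms(3) empty by fastforce
  next
    case False
    then have n: "4 \<le> n" using assms(4) by simp
    have "err_formula (n - 2) 1 1 < 13/3888"
    proof -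
      have "4 \<le> (real n - 2)\<^sup>2" using power_mono[of 2 "real n - 2" 2] n by simp
      then have "1 / (real n - 2)\<^sup>2 \<le> 1/4" by (intro divide_left_mono) auto
      moreover have "err_formula (n - 2) 1 1 = 1/216 * (1 / (real n - 2)\<^sup>2) + 2/3888"
        using n unfolding err_formula_def by (simp add: of_nat_diff)
      ultimately show ?thesis by linarith
    qed
    then show False
      using err_P_ge_if_near_empty[OF assms(1,2)] le[of "n - 2" 1 1] n empty by fastforce
  qed
qed

lemma Vn_P_le_err_formula:
  assumes "1 \<le> m1" "1 \<le> m2" "1 \<le> m3" "m1 + m2 + m3 \<le> n"
  shows "Vn P n \<le> ennreal (err_formula m1 m2 m3)"
proof -
  define Q1 where "Q1 = uniform_codebook 0 ((1/3 - 0) / real m1) m1"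
  define Q2 where "Q2 = uniform_codebook (2/3) ((7/9 - 2/3) / real m2) m2"
  define Q3 where "Q3 = uniform_codebook (8/9) ((1 - 8/9) / real m3) m3"
  have q1: "finite Q1" "Q1 \<noteq> {}" "card Q1 = m1" "Q1 \<subseteq> {0..1/3}"
      "interval_err 0 (1/3) Q1 \<le> (1/3 - 0)^3 / (12 * (real m1)\<^sup>2)"
    using uniform_codebook_interval[of 0 "1/3" m1] assms(1) unfolding Q1_def by simp_all
  have q2: "finite Q2" "Q2 \<noteq> {}" "card Q2 = m2" "Q2 \<subseteq> {2/3..7/9}"
      "interval_err (2/3) (7/9) Q2 \<le> (7/9 - 2/3)^3 / (12 * (real m2)\<^sup>2)"
    using uniform_codebook_interval[of "2/3" "7/9" m2] assms(2) unfolding Q2_def by simp_all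
  have q3: "finite Q3" "Q3 \<noteq> {}" "card Q3 = m3" "Q3 \<subseteq> {8/9..1}"
      "interval_err (8/9) 1 Q3 \<le> (1 - 8/9)^3 / (12 * (real m3)\<^sup>2)"
    using uniform_codebook_interval[of "8/9" 1 m3] assms(3) unfolding Q3_def by simp_all
  let ?B = "Q1 \<union> Q2 \<union> Q3"
  have fin: "finite ?B" "?B \<noteq> {}" using q1 q2 q3 by auto
  have "\<forall>x\<in>Q1. x \<le> 1/3" "\<forall>x\<in>Q2. 2/3 \<le> x \<and> x \<le> 7/9" "\<forall>x\<in>Q3. 8/9 \<le> x"
    using q1(4) q2(4) q3(4) by auto
  then have "Q1 \<inter> Q2 = {}" "(Q1 \<union> Q2) \<inter> Q3 = {}" by force+
  then have "card ?B = m1 + m2 + m3" using q1 q2 q3 by (simp add: card_Un_disjoint)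
  then have "?B \<in> codebooks n" using fin assms(4) unfolding codebooks_def by simp
  then have "Vn P n \<le> quant_err P ?B" unfolding Vn_def by (rule INF_lower)
  also have "\<dots> = ennreal (err_P ?B)" by (rule quant_err_P[OF fin])
  also have "\<dots> \<le> ennreal (err_formula m1 m2 m3)"
  proof (rule ennreal_leI)
    have "interval_err 0 (1/3) ?B \<le> interval_err 0 (1/3) Q1"
      "interval_err (2/3) (7/9) ?B \<le> interval_err (2/3) (7/9) Q2"
      "interval_err (8/9) 1 ?B \<le> interval_err (8/9) 1 Q3"
      using q1 q2 q3 fin by (intro interval_err_antimono; auto)+
    moreover have "err_formula m1 m2 m3 = 3/2 * ((1/3 - 0)^3 / (12 * (real m1)\<^sup>2))
        + 9/4 * ((7/9 - 2/3)^3 / (12 * (real m2)\<^sup>2)) + 9/4 * ((1 - 8/9)^3 / (12 * (real m3)\<^sup>2))"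
      unfolding err_formula_def by (simp add: field_simps)
    ultimately show "err_P ?B \<le> err_formula m1 m2 m3"
      using q1(5) q2(5) q3(5) unfolding err_P_def by linarith
  qed
  finally show ?thesis .
qed

lemma optimal_err_P:
  assumes "optimal_n_means P n \<alpha>"
  shows "finite \<alpha>" "\<alpha> \<noteq> {}" "card \<alpha> \<le> n" "Vn P n = ennreal (err_P \<alpha>)"
proof -
  from assms have "\<alpha> \<in> codebooks n" "quant_err P \<alpha> = Vn P n" unfolding optimal_n_means_def by auto
  then show "finite \<alpha>" "\<alpha> \<noteq> {}" "card \<alpha> \<le> n" "Vn P n = ennreal (err_P \<alpha>)"
    using quant_err_P[of \<alpha>] unfolding codebooks_def by auto
qed

lemma optimal_err_P_le_err_formula:
  assumes "optimal_n_means P n \<alpha>" "1 \<le> m1" "1 \<le> m2" "1 \<le> m3" "m1 + m2 + m3 \<le> n"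
  shows "err_P \<alpha> \<le> err_formula m1 m2 m3"
proof -
  have "0 \<le> err_formula m1 m2 m3" unfolding err_formula_def by simp
  moreover have "ennreal (err_P \<alpha>) \<le> ennreal (err_formula m1 m2 m3)"
    using Vn_P_le_err_formula[OF assms(2-5)] optimal_err_P(4)[OF assms(1)] by simp
  ultimately show ?thesis by (simp add: ennreal_le_iff)
qed

lemma err_formula_le_err_P:
  assumes "finite B" "near_J1 B \<noteq> {}" "near_J2 B \<noteq> {}" "near_J3 B \<noteq> {}"
  shows "err_formula (card (near_J1 B)) (card (near_J2 B)) (card (near_J3 B)) \<le> err_P B"
    and "(\<exists>s\<in>near_J1 B. s \<notin> J1) \<or> (\<exists>s\<in>near_J2 B. s \<notin> J2) \<or> (\<exists>s\<in>near_J3 B. s \<notin> J3) \<Longrightarrow>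
      err_formula (card (near_J1 B)) (card (near_J2 B)) (card (near_J3 B)) < err_P B"
proof -
  note lb = near_J_lower_bounds[OF assms(1)]
  note le = lb(1)[OF assms(2)] lb(2)[OF assms(3)] lb(3)[OF assms(4)]
  show "err_formula (card (near_J1 B)) (card (near_J2 B)) (card (near_J3 B)) \<le> err_P B"
    using le unfolding err_formula_def err_P_def distrib_left by linarith
  assume "(\<exists>s\<in>near_J1 B. s \<notin> J1) \<or> (\<exists>s\<in>near_J2 B. s \<notin> J2) \<or> (\<exists>s\<in>near_J3 B. s \<notin> J3)"
  then show "err_formula (card (near_J1 B)) (card (near_J2 B)) (card (near_J3 B)) < err_P B"
    using le lb(4-6) unfolding err_formula_def err_P_def distrib_left by (elim disjE) linarith+
qed

lemma err_formula_strict_antimono: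
  assumes "1 \<le> k" "k < k'"
  shows "err_formula k' m2 m3 < err_formula k m2 m3"
proof -
  have "(real k)\<^sup>2 < (real k')\<^sup>2" using assms by (intro power_strict_mono) auto
  then have "1 / (real k')\<^sup>2 < 1 / (real k)\<^sup>2" using assms by (intro divide_strict_left_mono) auto
  then show ?thesis unfolding err_formula_def by simp
qed

lemma optimal_structure:
  assumes "3 \<le> n" "optimal_n_means P n \<alpha>"
  shows "card \<alpha> = n" "\<alpha> \<inter> J1 = near_J1 \<alpha>" "\<alpha> \<inter> J2 = near_J2 \<alpha>" "\<alpha> \<inter> J3 = near_J3 \<alpha>"
    and "\<alpha> \<inter> J1 \<noteq> {}" "\<alpha> \<inter> J2 \<noteq> {}" "\<alpha> \<inter> J3 \<noteq> {}"
    and "err_P \<alpha> = err_formula (card (\<alpha> \<inter> J1)) (card (\<alpha> \<inter> J2)) (card (\<alpha> \<inter> J3))"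
proof -
  note \<alpha> = optimal_err_P[OF assms(2)] and le = optimal_err_P_le_err_formula[OF assms(2)]
  have ne: "near_J1 \<alpha> \<noteq> {}" "near_J2 \<alpha> \<noteq> {}" "near_J3 \<alpha> \<noteq> {}"
    using near_J_nonempty[OF \<alpha>(1-3) assms(1) le] by auto
  have k: "1 \<le> card (near_J1 \<alpha>)" "1 \<le> card (near_J2 \<alpha>)" "1 \<le> card (near_J3 \<alpha>)"
    using ne \<alpha>(1) by (auto simp: Suc_le_eq card_gt_0_iff near_J_defs)
  note card = card_near_J[OF \<alpha>(1)]
  note lower = err_formula_le_err_P[OF \<alpha>(1) ne]
  show n: "card \<alpha> = n"
  proof (rule ccontr)
    assume "card \<alpha> \<noteq> n"
    then have "card (near_J1 \<alpha>) < card (near_J1 \<alpha>) + (n - card \<alpha>)" using \<alpha>(3) by simp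
    then have "err_formula (card (near_J1 \<alpha>) + (n - card \<alpha>)) (card (near_J2 \<alpha>)) (card (near_J3 \<alpha>))
        < err_P \<alpha>"
      using err_formula_strict_antimono k lower(1) by (meson order.strict_trans2)
    moreover have "err_P \<alpha> \<le> err_formula (card (near_J1 \<alpha>) + (n - card \<alpha>)) (card (near_J2 \<alpha>)) (card (near_J3 \<alpha>))"
      using k card \<alpha>(3) by (intro le) auto
    ultimately show False by linarith
  qed
  have upper: "err_P \<alpha> \<le> err_formula (card (near_J1 \<alpha>)) (card (near_J2 \<alpha>)) (card (near_J3 \<alpha>))"
    using k card n by (intro le) auto
  then have "near_J1 \<alpha> \<subseteq> J1" "near_J2 \<alpha> \<subseteq> J2" "near_J3 \<alpha> \<subseteq> J3"
    using lower(2) by fastforce+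
  then show J: "\<alpha> \<inter> J1 = near_J1 \<alpha>" "\<alpha> \<inter> J2 = near_J2 \<alpha>" "\<alpha> \<inter> J3 = near_J3 \<alpha>"
    unfolding near_J_defs J1_def J2_def J3_def by auto
  show "\<alpha> \<inter> J1 \<noteq> {}" "\<alpha> \<inter> J2 \<noteq> {}" "\<alpha> \<inter> J3 \<noteq> {}" unfolding J by (fact ne)+
  show "err_P \<alpha> = err_formula (card (\<alpha> \<inter> J1)) (card (\<alpha> \<inter> J2)) (card (\<alpha> \<inter> J3))"
    unfolding J using upper lower(1) by linarith
qed

lemma optimal_cluster_err:
  assumes "3 \<le> n" "optimal_n_means P n \<alpha>"
  shows "interval_err 0 (1/3) (\<alpha> \<inter> J1) = (1/3 - 0)^3 / (12 * (real (card (\<alpha> \<inter> J1)))\<^sup>2)"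
    and "interval_err (2/3) (7/9) (\<alpha> \<inter> J2) = (7/9 - 2/3)^3 / (12 * (real (card (\<alpha> \<inter> J2)))\<^sup>2)"
    and "interval_err (8/9) 1 (\<alpha> \<inter> J3) = (1 - 8/9)^3 / (12 * (real (card (\<alpha> \<inter> J3)))\<^sup>2)"
proof -
  note S = optimal_structure[OF assms] and fin = optimal_err_P(1)[OF assms(2)]
  note near = near_J_lower_bounds(1-3)[OF fin, unfolded S(2-4)[symmetric]]
  note lb = near(1)[OF S(5)] near(2)[OF S(6)] near(3)[OF S(7)]
  have in_J: "u \<in> J1 \<or> u \<in> J2 \<or> u \<in> J3" if "u \<in> \<alpha>" for u
    using near_J_cases[OF that] S(2-4) by blast
  have "interval_err 0 (1/3) \<alpha> = interval_err 0 (1/3) (\<alpha> \<inter> J1)"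
    using S(5) fin by (intro interval_err_restrict) (auto simp: J1_def J2_def J3_def dest: in_J)
  moreover have "interval_err (2/3) (7/9) \<alpha> = interval_err (2/3) (7/9) (\<alpha> \<inter> J2)"
    using S(6) fin by (intro interval_err_restrict) (auto simp: J1_def J2_def J3_def dest: in_J)
  moreover have "interval_err (8/9) 1 \<alpha> = interval_err (8/9) 1 (\<alpha> \<inter> J3)"
    using S(7) fin by (intro interval_err_restrict) (auto simp: J1_def J2_def J3_def dest: in_J)
  moreover have "3/2 * interval_err 0 (1/3) \<alpha> = 1/216 * (1 / (real (card (\<alpha> \<inter> J1)))\<^sup>2)"
    "9/4 * interval_err (2/3) (7/9) \<alpha> = 1/3888 * (1 / (real (card (\<alpha> \<inter> J2)))\<^sup>2)"
    "9/4 * interval_err (8/9) 1 \<alpha> = 1/3888 * (1 / (real (card (\<alpha> \<inter> J3)))\<^sup>2)"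
    using lb S(8) unfolding err_P_def err_formula_def distrib_left by linarith+
  ultimately show "interval_err 0 (1/3) (\<alpha> \<inter> J1) = (1/3 - 0)^3 / (12 * (real (card (\<alpha> \<inter> J1)))\<^sup>2)"
    and "interval_err (2/3) (7/9) (\<alpha> \<inter> J2) = (7/9 - 2/3)^3 / (12 * (real (card (\<alpha> \<inter> J2)))\<^sup>2)"
    and "interval_err (8/9) 1 (\<alpha> \<inter> J3) = (1 - 8/9)^3 / (12 * (real (card (\<alpha> \<inter> J3)))\<^sup>2)"
    by (simp_all add: field_simps)
qed

theorem proposition5p8:
  fixes n :: nat and \<alpha> :: "real set"
  assumes "n \<ge> 3"
    and "optimal_n_means P n \<alpha>"
  shows "optimal_n_means (cond_measure P J1) (card (\<alpha> \<inter> J1)) (\<alpha> \<inter> J1)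
       \<and> optimal_n_means (cond_measure P J2) (card (\<alpha> \<inter> J2)) (\<alpha> \<inter> J2)
       \<and> optimal_n_means (cond_measure P J3) (card (\<alpha> \<inter> J3)) (\<alpha> \<inter> J3)
       \<and> n = card (\<alpha> \<inter> J1) + card (\<alpha> \<inter> J2) + card (\<alpha> \<inter> J3)
       \<and> Vn P n = dist_err P (\<alpha> \<inter> J1) J1 + dist_err P (\<alpha> \<inter> J2) J2 + dist_err P (\<alpha> \<inter> J3) J3
       \<and> Vn P n = ennreal (1/216 * (1 / (real (card (\<alpha> \<inter> J1)))\<^sup>2)
                 + 1/3888 * (1 / (real (card (\<alpha> \<inter> J2)))\<^sup>2 + 1 / (real (card (\<alpha> \<inter> J3)))\<^sup>2))"
proof -
  note \<alpha> = optimal_err_P[OF assms(2)] and S = optimal_structure[OF assms]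
    and C = optimal_cluster_err[OF assms]
  have fin: "finite (\<alpha> \<inter> J1)" "finite (\<alpha> \<inter> J2)" "finite (\<alpha> \<inter> J3)" using \<alpha>(1) by auto
  have "optimal_n_means (cond_measure P J1) (card (\<alpha> \<inter> J1)) (\<alpha> \<inter> J1)"
    unfolding J1_def using C(1) fin(1) S(5) dens_J(1)
    by (intro optimal_n_means_cond_P_interval[where c = "3/2"]) (auto simp: J1_def)
  moreover have "optimal_n_means (cond_measure P J2) (card (\<alpha> \<inter> J2)) (\<alpha> \<inter> J2)"
    unfolding J2_def using C(2) fin(2) S(6) dens_J(2)
    by (intro optimal_n_means_cond_P_interval[where c = "9/4"]) (auto simp: J2_def)
  moreover have "optimal_n_means (cond_measure P J3) (card (\<alpha> \<inter> J3)) (\<alpha> \<inter> J3)"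
    unfolding J3_def using C(3) fin(3) S(7) dens_J(3)
    by (intro optimal_n_means_cond_P_interval[where c = "9/4"]) (auto simp: J3_def)
  moreover have "n = card (\<alpha> \<inter> J1) + card (\<alpha> \<inter> J2) + card (\<alpha> \<inter> J3)"
    using card_near_J[OF \<alpha>(1)] S(1-4) by simp
  moreover have "Vn P n = ennreal (1/216 * (1 / (real (card (\<alpha> \<inter> J1)))\<^sup>2)
                 + 1/3888 * (1 / (real (card (\<alpha> \<inter> J2)))\<^sup>2 + 1 / (real (card (\<alpha> \<inter> J3)))\<^sup>2))"
    using \<alpha>(4) S(8) unfolding err_formula_def by simp
  moreover have "Vn P n = dist_err P (\<alpha> \<inter> J1) J1 + dist_err P (\<alpha> \<inter> J2) J2 + dist_err P (\<alpha> \<inter> J3) J3"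
    unfolding calculation(5) dist_err_P_J(1)[OF fin(1) S(5)] dist_err_P_J(2)[OF fin(2) S(6)]
      dist_err_P_J(3)[OF fin(3) S(7)] C
    by (simp add: ennreal_plus[symmetric] field_simps del: ennreal_plus)
  ultimately show ?thesis by blast
qed

end
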